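(* Let $\mathbb{P}$ be a nonlocal (non-signalling) box, and for $x,y\in\{0,1\}$ let $\eta_{x,y}:=2\,\mathbb{P}(a\oplus b=xy\mid x,y)-1=2\sum_{c\in\{0,1\}}\mathbb{P}(c,c\oplus xy\mid x,y)-1\in[-1,1]$. Define $$A:=(\eta_{0,0}+\eta_{0,1}+\eta_{1,0}+\eta_{1,1})^2,\qquad B:=2\eta_{0,0}^2+4\eta_{0,1}\eta_{1,0}+2\eta_{1,1}^2.$$ If $A+B>16$, then $\mathbb{P}$ collapses communication complexity: there exists a constant $p>1/2$ (depending only on $\mathbb{P}$) such that for all $n,m\ge 1$ and every Boolean function $f:\{0,1\}^n\times\{0,1\}^m\to\{0,1\}$, we have $\mathtt{CC}^p(f)\le 1$ when Alice and Bob are allowed arbitrarily many shared random bits and arbitrarily many copies of $\mathbb{P}$.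
   Context: A nonlocal box (NLB) is a conditional probability distribution $\mathbb{P}(a,b\mid x,y)$ on outputs $a,b\in\{0,1\}$ given inputs $x,y\in\{0,1\}$ satisfying the non-signalling conditions $\sum_{\tilde b}\mathbb{P}(a,\tilde b\mid x,0)=\sum_{\tilde b}\mathbb{P}(a,\tilde b\mid x,1)$ and $\sum_{\tilde a}\mathbb{P}(\tilde a,b\mid 0,y)=\sum_{\tilde a}\mathbb{P}(\tilde a,b\mid 1,y)$ for all $a,b,x,y$. Alice has access to the input $x$/output $a$ side and Bob to the input $y$/output $b$ side; each copy of the box can be used once, each party receiving their output immediately after inputting, regardless of the other's action. Here $\oplus$ denotes addition mod 2. Communication complexity game: given a known $f:\{0,1\}^n\times\{0,1\}^m\to\{0,1\}$, Alice receives $X\in\{0,1\}^n$ and Bob receives $Y\in\{0,1\}^m$; they are spacelike separated, may use shared randomness and copies of the box, and Bob may send communication bits to Alice; Alice must output a bit $a'$ with the goal $a'=f(X,Y)$. For $p\in[0,1]$, $\mathtt{CC}^p(f)$ is the minimal number of communication bits required so that Alice's answer is correct with probability at least $p$ for every pair $(X,Y)$. Communication complexity collapses (with respect to the allowed resources) if there exists $p>1/2$ such that $\mathtt{CC}^p(f)\le 1$ for all Boolean functions $f$. *)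

theory Defs
  imports Complex_Main
begin

text \<open>A box is P a b x y = probability of outputs (a,b) given inputs (x,y).
  Bits are represented by bool; xor is (\<noteq>) and product is (\<and>).\<close>

type_synonym box = "bool \<Rightarrow> bool \<Rightarrow> bool \<Rightarrow> bool \<Rightarrow> real"

definition nonlocal_box :: "box \<Rightarrow> bool" where
  "nonlocal_box P \<longleftrightarrow>
     (\<forall>a b x y. P a b x y \<ge> 0) \<and>
     (\<forall>x y. (\<Sum>a\<in>UNIV. \<Sum>b\<in>UNIV. P a b x y) = 1) \<and>
     (\<forall>a x. (\<Sum>b\<in>UNIV. P a b x False) = (\<Sum>b\<in>UNIV. P a b x True)) \<and>
     (\<forall>b y. (\<Sum>a\<in>UNIV. P a b False y) = (\<Sum>a\<in>UNIV. P a b True y))"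

definition eta :: "box \<Rightarrow> bool \<Rightarrow> bool \<Rightarrow> real" where
  "eta P x y = 2 * (\<Sum>c\<in>UNIV. P c (c \<noteq> (x \<and> y)) x y) - 1"

text \<open>Joint probability that Alice's N box outputs are as and Bob's are bs, when the
  boxes are used one after the other (copy k at step k) and the input to copy k
  depends adaptively on the party's previous outputs.\<close>

definition box_joint ::
  "box \<Rightarrow> (nat \<Rightarrow> bool list \<Rightarrow> bool) \<Rightarrow> (nat \<Rightarrow> bool list \<Rightarrow> bool) \<Rightarrow> nat
     \<Rightarrow> bool list \<Rightarrow> bool list \<Rightarrow> real" where
  "box_joint P xin yin N as bs =
     (\<Prod>k<N. P (as ! k) (bs ! k) (xin k (take k as)) (yin k (take k bs)))"

text \<open>Success probability of a protocol using R uniformly random shared bits r and N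
  boxes. ain X r k prev : Alice's input to box k; bin Y r k prev : Bob's input to box k;
  msg Y r bs : Bob's message (bit string); out X r as c : Alice's answer.\<close>

definition success_prob ::
  "box \<Rightarrow> nat \<Rightarrow> nat
   \<Rightarrow> (bool list \<Rightarrow> bool list \<Rightarrow> nat \<Rightarrow> bool list \<Rightarrow> bool)
   \<Rightarrow> (bool list \<Rightarrow> bool list \<Rightarrow> nat \<Rightarrow> bool list \<Rightarrow> bool)
   \<Rightarrow> (bool list \<Rightarrow> bool list \<Rightarrow> bool list \<Rightarrow> bool list)
   \<Rightarrow> (bool list \<Rightarrow> bool list \<Rightarrow> bool list \<Rightarrow> bool list \<Rightarrow> bool)
   \<Rightarrow> (bool list \<Rightarrow> bool list \<Rightarrow> bool) \<Rightarrow> bool list \<Rightarrow> bool list \<Rightarrow> real" where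
  "success_prob P R N ain bin msg out f X Y =
     (\<Sum>r\<in>{r. length r = R}. \<Sum>as\<in>{l. length l = N}. \<Sum>bs\<in>{l. length l = N}.
        box_joint P (ain X r) (bin Y r) N as bs *
        (if out X r as (msg Y r bs) = f X Y then 1 else 0)) / 2 ^ R"

text \<open>There is a protocol with k communication bits (Bob to Alice), shared randomness
  and copies of P, computing f on {0,1}^n x {0,1}^m correctly with probability \<ge> p
  for every input pair.\<close>

definition cc_protocol :: "box \<Rightarrow> real \<Rightarrow> (bool list \<Rightarrow> bool list \<Rightarrow> bool) \<Rightarrow> nat \<Rightarrow> nat \<Rightarrow> nat \<Rightarrow> bool" where
  "cc_protocol P p f n m k \<longleftrightarrow>
     (\<exists>R N ain bin msg out.
        (\<forall>Y r bs. length (msg Y r bs) = k) \<and>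
        (\<forall>X Y. length X = n \<longrightarrow> length Y = m \<longrightarrow> success_prob P R N ain bin msg out f X Y \<ge> p))"

definition CC_le_1 :: "box \<Rightarrow> real \<Rightarrow> (bool list \<Rightarrow> bool list \<Rightarrow> bool) \<Rightarrow> nat \<Rightarrow> nat \<Rightarrow> bool" where
  "CC_le_1 P p f n m \<longleftrightarrow> (\<exists>k\<le>1. cc_protocol P p f n m k)"

end

(*
  Call E[(-1)^(u xor v xor t)] the bias towards t of the output bits u, v of Alice and Bob.  One
  use of the box, with inputs randomised by shared coins, turns XOR-shares of the two bits
  g_0(Y'), g_1(Y') into XOR-shares of g_y(Y'), multiplying the bias by the average eta_mean of
  the four biases eta_xy (van Dam's multiplexer).  Recursing on Bob's input bits computes any
  f(X, Y) in XOR-shared form, but the bias decays geometrically in m.  A majority gadget using two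
  more boxes on three independent copies maps the bias beta to beta ((A + B)/16 + mu beta^2),
  which expands small biases exactly when A + B > 16.  Boosting after every recursion level
  therefore keeps the bias in a window [delta, epsilon] independent of n and m; Bob finally
  sends his share v and Alice outputs u xor v, which is correct with probability (1 + delta)/2.
*)

theory Submission
  imports Defs
begin

section \<open>Protocols using shared randomness and copies of a box\<close>

text \<open>\<open>alice_in X r k l\<close> is Alice's input to box \<open>k\<close>, given her input \<open>X\<close>, the shared random
  string \<open>r\<close> and her outputs \<open>l\<close> of the boxes \<open>0, \<dots>, k - 1\<close>, as in \<open>success_prob\<close>.\<close>

datatype ('x, 'y, 'u, 'v) protocol = Protocol
  (rand_len: nat) (box_count: nat)
  (alice_in: "'x \<Rightarrow> bool list \<Rightarrow> nat \<Rightarrow> bool list \<Rightarrow> bool")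
  (bob_in: "'y \<Rightarrow> bool list \<Rightarrow> nat \<Rightarrow> bool list \<Rightarrow> bool")
  (alice_out: "'x \<Rightarrow> bool list \<Rightarrow> bool list \<Rightarrow> 'u")
  (bob_out: "'y \<Rightarrow> bool list \<Rightarrow> bool list \<Rightarrow> 'v")

definition outcomes :: "nat \<Rightarrow> nat \<Rightarrow> (bool list \<times> bool list \<times> bool list) set" where
  "outcomes R N = {r. length r = R} \<times> {as. length as = N} \<times> {bs. length bs = N}"

definition expect :: "box \<Rightarrow> ('x, 'y, 'u, 'v) protocol \<Rightarrow> 'x \<Rightarrow> 'y \<Rightarrow> ('u \<Rightarrow> 'v \<Rightarrow> real) \<Rightarrow> real" where
  "expect P p X Y \<phi> =
     (\<Sum>(r, as, bs) \<in> outcomes (rand_len p) (box_count p).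
        box_joint P (alice_in p X r) (bob_in p Y r) (box_count p) as bs
        * \<phi> (alice_out p X r as) (bob_out p Y r bs)) / 2 ^ rand_len p"

lemma bij_betw_append_outcomes:
  "bij_betw (\<lambda>((r1, as1, bs1), (r2, as2, bs2)). (r1 @ r2, as1 @ as2, bs1 @ bs2))
     (outcomes R N \<times> outcomes R' N') (outcomes (R + R') (N + N'))"
proof (rule bij_betw_byWitness[where f' = "\<lambda>(r, as, bs).
        ((take R r, take N as, take N bs), (drop R r, drop N as, drop N bs))"])
  show "(\<lambda>(r, as, bs). ((take R r, take N as, take N bs), (drop R r, drop N as, drop N bs)))
      ` outcomes (R + R') (N + N') \<subseteq> outcomes R N \<times> outcomes R' N'"
    by (auto simp: outcomes_def)
qed (auto simp: outcomes_def)

lemma sum_outcomes_add: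
  "(\<Sum>w \<in> outcomes (R + R') (N + N'). G w) =
   (\<Sum>(r1, as1, bs1) \<in> outcomes R N. \<Sum>(r2, as2, bs2) \<in> outcomes R' N'.
      G (r1 @ r2, as1 @ as2, bs1 @ bs2))"
  by (simp add: sum.reindex_bij_betw[OF bij_betw_append_outcomes, symmetric]
      sum.cartesian_product split_def)

lemma bool_lists_length_1: "{l :: bool list. length l = Suc 0} = {[True], [False]}"
  by (auto simp: length_Suc_conv)

lemma card_bool_lists: "card {r :: bool list. length r = R} = 2 ^ R"
  using card_lists_length_eq[of "UNIV :: bool set" R] by simp

lemma box_joint_cong:
  "(\<And>k. k < N \<Longrightarrow> xin k = xin' k) \<Longrightarrow> (\<And>k. k < N \<Longrightarrow> yin k = yin' k) \<Longrightarrow>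
   box_joint P xin yin N as bs = box_joint P xin' yin' N as bs"
  unfolding box_joint_def by (rule prod.cong) auto

lemma box_joint_append:
  assumes "length as1 = N1" "length bs1 = N1"
  shows "box_joint P xin yin (N1 + N2) (as1 @ as2) (bs1 @ bs2) =
    box_joint P xin yin N1 as1 bs1 *
    box_joint P (\<lambda>k l. xin (N1 + k) (as1 @ l)) (\<lambda>k l. yin (N1 + k) (bs1 @ l)) N2 as2 bs2"
proof -
  let ?F = "\<lambda>k. P ((as1 @ as2) ! k) ((bs1 @ bs2) ! k)
                   (xin k (take k (as1 @ as2))) (yin k (take k (bs1 @ bs2)))"
  have "box_joint P xin yin (N1 + N2) (as1 @ as2) (bs1 @ bs2) = prod ?F {..<N1} * prod ?F {N1..<N1 + N2}"
    unfolding box_joint_def by (subst prod.union_disjoint[symmetric]) (auto intro: prod.cong)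
  also have "prod ?F {..<N1} = box_joint P xin yin N1 as1 bs1"
    unfolding box_joint_def using assms by (intro prod.cong) (auto simp: nth_append)
  also have "prod ?F {N1..<N1 + N2} = (\<Prod>j<N2. ?F (N1 + j))"
    by (rule prod.reindex_bij_witness[of _ "\<lambda>j. N1 + j" "\<lambda>k. k - N1"]) auto
  also have "\<dots> = box_joint P (\<lambda>k l. xin (N1 + k) (as1 @ l)) (\<lambda>k l. yin (N1 + k) (bs1 @ l)) N2 as2 bs2"
    unfolding box_joint_def using assms by (intro prod.cong) (auto simp: nth_append)
  finally show ?thesis .
qed

lemma nonlocal_box_sum_eq_1: "nonlocal_box P \<Longrightarrow> (\<Sum>a\<in>UNIV. \<Sum>b\<in>UNIV. P a b x y) = 1"
  unfolding nonlocal_box_def by blast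

lemma sum_box_joint_outcomes:
  assumes P: "nonlocal_box P"
  shows "(\<Sum>(r, as, bs) \<in> outcomes R N. box_joint P (xin r) (yin r) N as bs) = 2 ^ R"
proof (induction N)
  case 0
  have "outcomes R 0 = {r. length r = R} \<times> {[]} \<times> {[]}"
    by (auto simp: outcomes_def)
  then show ?case
    by (simp add: box_joint_def card_cartesian_product card_bool_lists)
next
  case (Suc N)
  have last_box: "(\<Sum>(r2, as2, bs2) \<in> outcomes 0 (Suc 0).
      box_joint P (xin (r1 @ r2)) (yin (r1 @ r2)) (Suc N) (as1 @ as2) (bs1 @ bs2))
    = box_joint P (xin r1) (yin r1) N as1 bs1"
    if "(r1, as1, bs1) \<in> outcomes R N" for r1 as1 bs1
  proof -
    have "box_joint P (xin r1) (yin r1) (N + Suc 0) (as1 @ [a]) (bs1 @ [b]) =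
        box_joint P (xin r1) (yin r1) N as1 bs1 * P a b (xin r1 N as1) (yin r1 N bs1)" for a b
      using that by (subst box_joint_append) (auto simp: outcomes_def box_joint_def)
    then show ?thesis
      using nonlocal_box_sum_eq_1[OF P, of "xin r1 N as1" "yin r1 N bs1"]
      by (simp add: outcomes_def bool_lists_length_1 UNIV_bool algebra_simps flip: distrib_left)
  qed
  have "(\<Sum>(r, as, bs) \<in> outcomes R (Suc N). box_joint P (xin r) (yin r) (Suc N) as bs) =
      (\<Sum>(r1, as1, bs1) \<in> outcomes R N. \<Sum>(r2, as2, bs2) \<in> outcomes 0 (Suc 0).
        box_joint P (xin (r1 @ r2)) (yin (r1 @ r2)) (Suc N) (as1 @ as2) (bs1 @ bs2))"
    using sum_outcomes_add[where R = R and R' = 0 and N = N and N' = "Suc 0"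
        and G = "\<lambda>(r, as, bs). box_joint P (xin r) (yin r) (N + Suc 0) as bs"]
    by simp
  also have "\<dots> = (\<Sum>(r1, as1, bs1) \<in> outcomes R N. box_joint P (xin r1) (yin r1) N as1 bs1)"
    by (rule sum.cong[OF refl]) (clarsimp simp: last_box)
  finally show ?case using Suc.IH by simp
qed

lemma expect_affine:
  assumes "nonlocal_box P"
  shows "expect P p X Y (\<lambda>u v. c + d * \<phi> u v) = c + d * expect P p X Y \<phi>"
proof -
  have "(\<Sum>(r, as, bs) \<in> outcomes (rand_len p) (box_count p).
      box_joint P (alice_in p X r) (bob_in p Y r) (box_count p) as bs) = 2 ^ rand_len p"
    by (rule sum_box_joint_outcomes[OF assms])
  then show ?thesis
    unfolding expect_def
    by (simp add: split_def algebra_simps sum.distrib add_divide_distrib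
        flip: sum_distrib_left)
qed

lemma expect_const: "nonlocal_box P \<Longrightarrow> expect P p X Y (\<lambda>u v. c) = c"
  using expect_affine[where d = 0] by simp

lemma expect_scale: "nonlocal_box P \<Longrightarrow> expect P p X Y (\<lambda>u v. d * \<phi> u v) = d * expect P p X Y \<phi>"
  using expect_affine[where c = 0] by simp

text \<open>Run \<open>p\<close>, then \<open>q\<close> on the inputs paired with the outputs of \<open>p\<close>, with fresh random bits
  and fresh boxes.\<close>

definition prot_bind ::
  "('x, 'y, 'u, 'v) protocol \<Rightarrow> ('x \<times> 'u, 'y \<times> 'v, 'u', 'v') protocol \<Rightarrow> ('x, 'y, 'u', 'v') protocol"
where
  "prot_bind p q = Protocol (rand_len p + rand_len q) (box_count p + box_count q)
    (\<lambda>X r k l. if k < box_count p then alice_in p X (take (rand_len p) r) k l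
       else alice_in q (X, alice_out p X (take (rand_len p) r) (take (box_count p) l))
              (drop (rand_len p) r) (k - box_count p) (drop (box_count p) l))
    (\<lambda>Y r k l. if k < box_count p then bob_in p Y (take (rand_len p) r) k l
       else bob_in q (Y, bob_out p Y (take (rand_len p) r) (take (box_count p) l))
              (drop (rand_len p) r) (k - box_count p) (drop (box_count p) l))
    (\<lambda>X r as. alice_out q (X, alice_out p X (take (rand_len p) r) (take (box_count p) as))
       (drop (rand_len p) r) (drop (box_count p) as))
    (\<lambda>Y r bs. bob_out q (Y, bob_out p Y (take (rand_len p) r) (take (box_count p) bs))
       (drop (rand_len p) r) (drop (box_count p) bs))"

lemma rand_len_bind [simp]: "rand_len (prot_bind p q) = rand_len p + rand_len q"
  and box_count_bind [simp]: "box_count (prot_bind p q) = box_count p + box_count q"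
  by (simp_all add: prot_bind_def)

lemma out_bind:
  assumes "(r, as, bs) \<in> outcomes (rand_len p) (box_count p)"
  shows "alice_out (prot_bind p q) X (r @ r') (as @ as') = alice_out q (X, alice_out p X r as) r' as'"
    and "bob_out (prot_bind p q) Y (r @ r') (bs @ bs') = bob_out q (Y, bob_out p Y r bs) r' bs'"
  using assms by (simp_all add: prot_bind_def outcomes_def)

lemma box_joint_bind:
  assumes "(r, as, bs) \<in> outcomes (rand_len p) (box_count p)"
  shows "box_joint P (alice_in (prot_bind p q) X (r @ r')) (bob_in (prot_bind p q) Y (r @ r'))
      (box_count p + box_count q) (as @ as') (bs @ bs') =
    box_joint P (alice_in p X r) (bob_in p Y r) (box_count p) as bs *
    box_joint P (alice_in q (X, alice_out p X r as) r') (bob_in q (Y, bob_out p Y r bs) r')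
      (box_count q) as' bs'"
  using assms unfolding outcomes_def
  by (subst box_joint_append) (auto simp: prot_bind_def intro!: arg_cong2[where f = "(*)"] box_joint_cong)

lemma expect_bind:
  "expect P (prot_bind p q) X Y \<phi> = expect P p X Y (\<lambda>u v. expect P q (X, u) (Y, v) \<phi>)"
proof -
  define E where "E r as bs = (\<Sum>(r', as', bs') \<in> outcomes (rand_len q) (box_count q).
      box_joint P (alice_in q (X, alice_out p X r as) r') (bob_in q (Y, bob_out p Y r bs) r')
        (box_count q) as' bs' *
      \<phi> (alice_out q (X, alice_out p X r as) r' as') (bob_out q (Y, bob_out p Y r bs) r' bs'))"
    for r as bs
  have "expect P (prot_bind p q) X Y \<phi> =
      (\<Sum>(r, as, bs) \<in> outcomes (rand_len p) (box_count p).
        \<Sum>(r', as', bs') \<in> outcomes (rand_len q) (box_count q).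
          box_joint P (alice_in (prot_bind p q) X (r @ r')) (bob_in (prot_bind p q) Y (r @ r'))
            (box_count p + box_count q) (as @ as') (bs @ bs') *
          \<phi> (alice_out (prot_bind p q) X (r @ r') (as @ as'))
            (bob_out (prot_bind p q) Y (r @ r') (bs @ bs')))
      / 2 ^ (rand_len p + rand_len q)"
    unfolding expect_def by (simp only: rand_len_bind box_count_bind sum_outcomes_add prod.case)
  also have "\<dots> = (\<Sum>(r, as, bs) \<in> outcomes (rand_len p) (box_count p).
      box_joint P (alice_in p X r) (bob_in p Y r) (box_count p) as bs * E r as bs)
      / 2 ^ (rand_len p + rand_len q)"
    unfolding E_def
    by (intro arg_cong2[where f = "(/)"] sum.cong refl)
       (clarsimp simp: box_joint_bind out_bind sum_distrib_left split_def mult.assoc)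
  also have "\<dots> = expect P p X Y (\<lambda>u v. expect P q (X, u) (Y, v) \<phi>)"
  proof -
    have "(\<Sum>w\<in>A. f w * g w) / (a * b) = (\<Sum>w\<in>A. f w * (g w / b)) / (a :: real)" for A f g a b
      by (simp add: sum_divide_distrib mult.commute)
    then show ?thesis
      unfolding expect_def E_def power_add by (simp only: split_def)
  qed
  finally show ?thesis .
qed

definition prot_premap ::
  "('x' \<Rightarrow> 'x) \<Rightarrow> ('y' \<Rightarrow> 'y) \<Rightarrow> ('x, 'y, 'u, 'v) protocol \<Rightarrow> ('x', 'y', 'u, 'v) protocol"
where
  "prot_premap fx fy p = Protocol (rand_len p) (box_count p)
     (\<lambda>X. alice_in p (fx X)) (\<lambda>Y. bob_in p (fy Y)) (\<lambda>X. alice_out p (fx X)) (\<lambda>Y. bob_out p (fy Y))"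

definition prot_return :: "('x \<Rightarrow> 'u) \<Rightarrow> ('y \<Rightarrow> 'v) \<Rightarrow> ('x, 'y, 'u, 'v) protocol" where
  "prot_return fx fy = Protocol 0 0 (\<lambda>_ _ _ _. False) (\<lambda>_ _ _ _. False) (\<lambda>X _ _. fx X) (\<lambda>Y _ _. fy Y)"

definition shared_coin :: "('x, 'y, bool, bool) protocol" where
  "shared_coin = Protocol 1 0 (\<lambda>_ _ _ _. False) (\<lambda>_ _ _ _. False) (\<lambda>_ r _. hd r) (\<lambda>_ r _. hd r)"

definition box_query :: "('x \<Rightarrow> bool) \<Rightarrow> ('y \<Rightarrow> bool) \<Rightarrow> ('x, 'y, bool, bool) protocol" where
  "box_query ix iy = Protocol 0 1 (\<lambda>X _ _ _. ix X) (\<lambda>Y _ _ _. iy Y) (\<lambda>_ _ as. hd as) (\<lambda>_ _ bs. hd bs)"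

lemma expect_premap [simp]: "expect P (prot_premap fx fy p) X Y \<phi> = expect P p (fx X) (fy Y) \<phi>"
  by (simp add: expect_def prot_premap_def)

lemma expect_return [simp]: "expect P (prot_return fx fy) X Y \<phi> = \<phi> (fx X) (fy Y)"
  by (simp add: expect_def prot_return_def outcomes_def box_joint_def)

lemma expect_shared_coin [simp]: "expect P shared_coin X Y \<phi> = (\<phi> True True + \<phi> False False) / 2"
  by (simp add: expect_def shared_coin_def outcomes_def box_joint_def bool_lists_length_1)

lemma expect_box_query [simp]:
  "expect P (box_query ix iy) X Y \<phi> = (\<Sum>a\<in>UNIV. \<Sum>b\<in>UNIV. P a b (ix X) (iy Y) * \<phi> a b)"
  by (simp add: expect_def box_query_def outcomes_def box_joint_def bool_lists_length_1
      UNIV_bool sum.cartesian_product[symmetric] algebra_simps)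

section \<open>Biases of XOR-shared bits\<close>

definition spin :: "bool \<Rightarrow> real" where
  "spin b = (if b then -1 else 1)"

lemma spin_xor: "spin (a \<noteq> b) = spin a * spin b"
  by (simp add: spin_def)

text \<open>The bias \<open>2 Pr[u \<noteq> v \<longleftrightarrow> t] - 1\<close>; \<open>eta P x y\<close> is the bias of one use of the box
  towards \<open>x \<and> y\<close>.\<close>

definition xor_bias :: "box \<Rightarrow> ('x, 'y, bool, bool) protocol \<Rightarrow> 'x \<Rightarrow> 'y \<Rightarrow> bool \<Rightarrow> real" where
  "xor_bias P p X Y t = expect P p X Y (\<lambda>u v. spin ((u \<noteq> v) \<noteq> t))"

definition error_prob :: "real \<Rightarrow> bool \<Rightarrow> real" where
  "error_prob \<beta> e = (1 + spin e * \<beta>) / 2"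

lemma sum_UNIV_bool: "(\<Sum>b\<in>UNIV. f b) = f True + f False"
  by (simp add: UNIV_bool add.commute)

lemma expect_xor_error:
  assumes "nonlocal_box P"
  shows "expect P p X Y (\<lambda>u v. w ((u \<noteq> v) \<noteq> t)) =
    (\<Sum>e\<in>UNIV. error_prob (xor_bias P p X Y t) e * w e)"
proof -
  have affine: "(\<lambda>u v. w ((u \<noteq> v) \<noteq> t)) =
      (\<lambda>u v. (w False + w True) / 2 + (w False - w True) / 2 * spin ((u \<noteq> v) \<noteq> t))"
    by (auto simp: fun_eq_iff spin_def field_simps)
  have "expect P p X Y (\<lambda>u v. w ((u \<noteq> v) \<noteq> t)) =
      (w False + w True) / 2 + (w False - w True) / 2 * xor_bias P p X Y t"
    unfolding affine xor_bias_def by (rule expect_affine[OF assms])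
  then show ?thesis
    by (simp add: sum_UNIV_bool error_prob_def spin_def field_simps)
qed

lemma box_correlation:
  assumes "nonlocal_box P" and "\<And>a b. F a b = k * spin ((a \<noteq> b) \<noteq> w)"
  shows "(\<Sum>a\<in>UNIV. \<Sum>b\<in>UNIV. P a b x y * F a b) = k * (spin (w \<noteq> (x \<and> y)) * eta P x y)"
proof -
  have "P False False x y = 1 - P True True x y - P True False x y - P False True x y"
    using nonlocal_box_sum_eq_1[OF assms(1), of x y] by (simp add: UNIV_bool)
  then show ?thesis
    unfolding assms(2) eta_def spin_def
    by (cases x; cases y; cases w; simp add: UNIV_bool algebra_simps; simp flip: distrib_left)
qed

section \<open>The multiplexer and majority gadgets\<close>

definition eta_mean :: "box \<Rightarrow> real" where
  "eta_mean P = (eta P False False + eta P False True + eta P True False + eta P True True) / 4"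

text \<open>With an ideal box (\<open>c \<noteq> d \<longleftrightarrow> x \<and> y\<close>) the outputs satisfy
  \<open>u \<noteq> v \<longleftrightarrow> (a\<^sub>y \<noteq> b\<^sub>y) \<noteq> flip\<close>.  The shared bits \<open>\<alpha>, \<beta>\<close> make the four box input pairs equally
  likely, whence the average \<open>eta_mean\<close>.\<close>

definition mux_gadget :: "bool \<Rightarrow> (bool \<times> bool, bool \<times> bool \<times> bool, bool, bool) protocol" where
  "mux_gadget flip = prot_bind shared_coin (prot_bind shared_coin
     (prot_bind (box_query (\<lambda>(((a0, a1), \<alpha>), \<beta>). (a0 \<noteq> a1) \<noteq> \<alpha>) (\<lambda>(((y, _), \<alpha>), \<beta>). y \<noteq> \<beta>))
       (prot_return
         (\<lambda>((((a0, a1), \<alpha>), \<beta>), c). (((a0 \<noteq> c) \<noteq> ((a0 \<noteq> a1) \<and> \<beta>)) \<noteq> (\<alpha> \<and> \<beta>)) \<noteq> flip)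
         (\<lambda>((((y, b0, b1), \<alpha>), \<beta>), d). ((b0 \<noteq> (y \<and> (b0 \<noteq> b1))) \<noteq> d) \<noteq> (\<alpha> \<and> y)))))"

lemma expect_mux_gadget:
  "expect P (mux_gadget flip) (a0, a1) (y, b0, b1) \<phi> =
    (\<Sum>\<alpha>\<in>UNIV. \<Sum>\<beta>\<in>UNIV. \<Sum>c\<in>UNIV. \<Sum>d\<in>UNIV. P c d ((a0 \<noteq> a1) \<noteq> \<alpha>) (y \<noteq> \<beta>) *
       \<phi> ((((a0 \<noteq> c) \<noteq> ((a0 \<noteq> a1) \<and> \<beta>)) \<noteq> (\<alpha> \<and> \<beta>)) \<noteq> flip)
         (((b0 \<noteq> (y \<and> (b0 \<noteq> b1))) \<noteq> d) \<noteq> (\<alpha> \<and> y))) / 4"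
  unfolding mux_gadget_def
  by (simp only: expect_bind expect_shared_coin expect_box_query expect_return prod.case sum_UNIV_bool)
     (simp only: add_divide_distrib)

lemma xor_bias_mux_gadget:
  assumes P: "nonlocal_box P"
  shows "xor_bias P (mux_gadget flip) (a0, a1) (y, b0, b1) t =
    spin flip * spin ((if y then a1 \<noteq> b1 else a0 \<noteq> b0) \<noteq> t) * eta_mean P"
proof -
  have box: "(\<Sum>c\<in>UNIV. \<Sum>d\<in>UNIV. P c d ((a0 \<noteq> a1) \<noteq> \<alpha>) (y \<noteq> \<beta>) *
      spin ((((((a0 \<noteq> c) \<noteq> ((a0 \<noteq> a1) \<and> \<beta>)) \<noteq> (\<alpha> \<and> \<beta>)) \<noteq> flip)
        \<noteq> (((b0 \<noteq> (y \<and> (b0 \<noteq> b1))) \<noteq> d) \<noteq> (\<alpha> \<and> y))) \<noteq> t))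
    = 1 * (spin ((((((a0 \<noteq> ((a0 \<noteq> a1) \<and> \<beta>)) \<noteq> (\<alpha> \<and> \<beta>)) \<noteq> flip)
        \<noteq> ((b0 \<noteq> (y \<and> (b0 \<noteq> b1))) \<noteq> (\<alpha> \<and> y))) \<noteq> t) \<noteq> (((a0 \<noteq> a1) \<noteq> \<alpha>) \<and> (y \<noteq> \<beta>)))
      * eta P ((a0 \<noteq> a1) \<noteq> \<alpha>) (y \<noteq> \<beta>))" for \<alpha> \<beta>
    by (rule box_correlation[OF P]) (simp only: mult_1_left, rule arg_cong[where f = spin], argo)
  have ideal: "spin ((((((a0 \<noteq> ((a0 \<noteq> a1) \<and> \<beta>)) \<noteq> (\<alpha> \<and> \<beta>)) \<noteq> flip)
        \<noteq> ((b0 \<noteq> (y \<and> (b0 \<noteq> b1))) \<noteq> (\<alpha> \<and> y))) \<noteq> t) \<noteq> (((a0 \<noteq> a1) \<noteq> \<alpha>) \<and> (y \<noteq> \<beta>)))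
    = spin flip * spin ((if y then a1 \<noteq> b1 else a0 \<noteq> b0) \<noteq> t)" for \<alpha> \<beta>
    unfolding spin_xor[symmetric]
    by (cases y; simp only: if_True if_False; rule arg_cong[where f = spin]; argo)
  have average: "(\<Sum>\<alpha>\<in>UNIV. \<Sum>\<beta>\<in>UNIV. eta P (x \<noteq> \<alpha>) (z \<noteq> \<beta>)) = 4 * eta_mean P" for x z :: bool
    unfolding eta_mean_def by (cases x; cases z; simp add: sum_UNIV_bool)
  show ?thesis
    unfolding xor_bias_def expect_mux_gadget box ideal mult_1_left
    by (simp only: sum_distrib_left[symmetric] average)
qed

text \<open>For \<open>e\<^sub>i = a\<^sub>i \<noteq> b\<^sub>i\<close>, the majority of \<open>e\<^sub>1, e\<^sub>2, e\<^sub>3\<close> is \<open>e\<^sub>1 \<noteq> ((e\<^sub>1 \<noteq> e\<^sub>2) \<and> (e\<^sub>1 \<noteq> e\<^sub>3))\<close>.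
  In the product, \<open>e\<^sub>1 \<noteq> e\<^sub>2 = (a\<^sub>1 \<noteq> a\<^sub>2) \<noteq> (b\<^sub>1 \<noteq> b\<^sub>2)\<close> and similarly for \<open>e\<^sub>1 \<noteq> e\<^sub>3\<close>; the two cross
  terms are obtained from the boxes, with inputs masked by the shared bits \<open>\<rho>1, \<rho>2\<close>.\<close>

definition maj_gadget :: "(bool \<times> bool \<times> bool, bool \<times> bool \<times> bool, bool, bool) protocol" where
  "maj_gadget = prot_bind shared_coin (prot_bind shared_coin
    (prot_bind (box_query (\<lambda>(((a1, a2, a3), \<rho>1), \<rho>2). (a1 \<noteq> a2) \<noteq> \<rho>1)
                          (\<lambda>(((b1, b2, b3), \<rho>1), \<rho>2). (b1 \<noteq> b3) \<noteq> \<rho>2))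
    (prot_bind (box_query (\<lambda>((((a1, a2, a3), \<rho>1), \<rho>2), _). (a1 \<noteq> a3) \<noteq> \<rho>2)
                          (\<lambda>((((b1, b2, b3), \<rho>1), \<rho>2), _). (b1 \<noteq> b2) \<noteq> \<rho>1))
      (prot_return
        (\<lambda>(((((a1, a2, a3), \<rho>1), \<rho>2), c1), c2).
           ((a1 \<noteq> (((a1 \<noteq> a2) \<noteq> \<rho>1) \<and> ((a1 \<noteq> a3) \<noteq> \<rho>2))) \<noteq> c1) \<noteq> c2)
        (\<lambda>(((((b1, b2, b3), \<rho>1), \<rho>2), d1), d2).
           ((b1 \<noteq> (((b1 \<noteq> b2) \<noteq> \<rho>1) \<and> ((b1 \<noteq> b3) \<noteq> \<rho>2))) \<noteq> d1) \<noteq> d2)))))"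

lemma expect_maj_gadget:
  "expect P maj_gadget (a1, a2, a3) (b1, b2, b3) \<phi> =
    (\<Sum>\<rho>1\<in>UNIV. \<Sum>\<rho>2\<in>UNIV. \<Sum>c1\<in>UNIV. \<Sum>d1\<in>UNIV.
       P c1 d1 ((a1 \<noteq> a2) \<noteq> \<rho>1) ((b1 \<noteq> b3) \<noteq> \<rho>2) *
       (\<Sum>c2\<in>UNIV. \<Sum>d2\<in>UNIV. P c2 d2 ((a1 \<noteq> a3) \<noteq> \<rho>2) ((b1 \<noteq> b2) \<noteq> \<rho>1) *
         \<phi> (((a1 \<noteq> (((a1 \<noteq> a2) \<noteq> \<rho>1) \<and> ((a1 \<noteq> a3) \<noteq> \<rho>2))) \<noteq> c1) \<noteq> c2)
           (((b1 \<noteq> (((b1 \<noteq> b2) \<noteq> \<rho>1) \<and> ((b1 \<noteq> b3) \<noteq> \<rho>2))) \<noteq> d1) \<noteq> d2))) / 4"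
  unfolding maj_gadget_def
  by (simp only: expect_bind expect_shared_coin expect_box_query expect_return prod.case sum_UNIV_bool)
     (simp only: add_divide_distrib)

definition maj3 :: "bool \<Rightarrow> bool \<Rightarrow> bool \<Rightarrow> bool" where
  "maj3 x y z \<longleftrightarrow> (x \<and> y) \<or> (x \<and> z) \<or> (y \<and> z)"

definition maj_gadget_bias :: "box \<Rightarrow> bool \<Rightarrow> bool \<Rightarrow> real" where
  "maj_gadget_bias P u v = (\<Sum>\<rho>\<in>UNIV. \<Sum>\<rho>'\<in>UNIV. eta P \<rho> (\<rho>' \<noteq> v) * eta P \<rho>' (\<rho> \<noteq> u)) / 4"

lemma maj_gadget_bias_shift:
  fixes x y x' y' :: bool
  shows "(\<Sum>\<rho>1\<in>UNIV. \<Sum>\<rho>2\<in>UNIV. eta P (x' \<noteq> \<rho>2) (y \<noteq> \<rho>1) * eta P (x \<noteq> \<rho>1) (y' \<noteq> \<rho>2)) / 4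
   = maj_gadget_bias P (x \<noteq> y) (x' \<noteq> y')"
  unfolding maj_gadget_bias_def
  by (cases x; cases y; cases x'; cases y'; simp add: sum_UNIV_bool algebra_simps)

lemma xor_bias_maj_gadget:
  assumes P: "nonlocal_box P"
  shows "xor_bias P maj_gadget (a1, a2, a3) (b1, b2, b3) t =
    spin (maj3 (a1 \<noteq> b1) (a2 \<noteq> b2) (a3 \<noteq> b3) \<noteq> t) *
    maj_gadget_bias P ((a1 \<noteq> b1) \<noteq> (a2 \<noteq> b2)) ((a1 \<noteq> b1) \<noteq> (a3 \<noteq> b3))"
proof -
  have second_box: "(\<Sum>c2\<in>UNIV. \<Sum>d2\<in>UNIV. P c2 d2 p' q *
       spin (((((a1 \<noteq> (p \<and> p')) \<noteq> c1) \<noteq> c2) \<noteq> (((b1 \<noteq> (q \<and> q')) \<noteq> d1) \<noteq> d2)) \<noteq> t))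
     = 1 * (spin (((((a1 \<noteq> (p \<and> p')) \<noteq> c1) \<noteq> ((b1 \<noteq> (q \<and> q')) \<noteq> d1)) \<noteq> t) \<noteq> (p' \<and> q))
         * eta P p' q)" for p q p' q' c1 d1
    by (rule box_correlation[OF P]) (simp only: mult_1_left, rule arg_cong[where f = spin], argo)
  have first_box: "(\<Sum>c1\<in>UNIV. \<Sum>d1\<in>UNIV. P c1 d1 p q' *
      (1 * (spin (((((a1 \<noteq> (p \<and> p')) \<noteq> c1) \<noteq> ((b1 \<noteq> (q \<and> q')) \<noteq> d1)) \<noteq> t) \<noteq> (p' \<and> q))
         * eta P p' q)))
     = eta P p' q * (spin (((((a1 \<noteq> (p \<and> p')) \<noteq> (b1 \<noteq> (q \<and> q'))) \<noteq> t) \<noteq> (p' \<and> q)) \<noteq> (p \<and> q'))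
         * eta P p q')" for p q p' q'
    by (rule box_correlation[OF P]) (subst mult_1_left, subst mult.commute,
        rule arg_cong[where f = "\<lambda>b. eta P p' q * spin b"], argo)
  have majority: "spin (((((a1 \<noteq> (((a1 \<noteq> a2) \<noteq> \<rho>1) \<and> ((a1 \<noteq> a3) \<noteq> \<rho>2)))
        \<noteq> (b1 \<noteq> (((b1 \<noteq> b2) \<noteq> \<rho>1) \<and> ((b1 \<noteq> b3) \<noteq> \<rho>2)))) \<noteq> t)
        \<noteq> (((a1 \<noteq> a3) \<noteq> \<rho>2) \<and> ((b1 \<noteq> b2) \<noteq> \<rho>1))) \<noteq> (((a1 \<noteq> a2) \<noteq> \<rho>1) \<and> ((b1 \<noteq> b3) \<noteq> \<rho>2)))
      = spin (maj3 (a1 \<noteq> b1) (a2 \<noteq> b2) (a3 \<noteq> b3) \<noteq> t)" for \<rho>1 \<rho>2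
    unfolding maj3_def by (rule arg_cong[where f = spin]) auto
  have xor_eq: "((a1 \<noteq> b1) \<noteq> (a2 \<noteq> b2)) = ((a1 \<noteq> a2) \<noteq> (b1 \<noteq> b2))"
    "((a1 \<noteq> b1) \<noteq> (a3 \<noteq> b3)) = ((a1 \<noteq> a3) \<noteq> (b1 \<noteq> b3))" by auto
  show ?thesis
    unfolding xor_bias_def expect_maj_gadget second_box first_box majority xor_eq
      maj_gadget_bias_shift[symmetric]
    by (simp add: sum_distrib_left sum_divide_distrib algebra_simps)
qed

section \<open>Bias amplification\<close>

definition triplicate :: "('x, 'y, bool, bool) protocol \<Rightarrow> ('x, 'y, bool \<times> bool \<times> bool, bool \<times> bool \<times> bool) protocol"
where
  "triplicate M = prot_bind M (prot_bind (prot_premap fst fst M)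
     (prot_bind (prot_premap (\<lambda>((X, _), _). X) (\<lambda>((Y, _), _). Y) M)
       (prot_return (\<lambda>(((_, a1), a2), a3). (a1, a2, a3)) (\<lambda>(((_, b1), b2), b3). (b1, b2, b3)))))"

definition maj_step :: "('x, 'y, bool, bool) protocol \<Rightarrow> ('x, 'y, bool, bool) protocol" where
  "maj_step M = prot_bind (triplicate M) (prot_premap snd snd maj_gadget)"

definition maj_weight :: "box \<Rightarrow> bool \<Rightarrow> bool \<Rightarrow> bool \<Rightarrow> real" where
  "maj_weight P e1 e2 e3 = spin (maj3 e1 e2 e3) * maj_gadget_bias P (e1 \<noteq> e2) (e1 \<noteq> e3)"

lemma maj_weight_xor:
  "maj_weight P (e1 \<noteq> t) (e2 \<noteq> t) (e3 \<noteq> t) = spin (maj3 e1 e2 e3 \<noteq> t) * maj_gadget_bias P (e1 \<noteq> e2) (e1 \<noteq> e3)"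
proof -
  have "maj3 (e1 \<noteq> t) (e2 \<noteq> t) (e3 \<noteq> t) = (maj3 e1 e2 e3 \<noteq> t)"
    unfolding maj3_def by argo
  moreover have "((e1 \<noteq> t) \<noteq> (e2 \<noteq> t)) = (e1 \<noteq> e2)" "((e1 \<noteq> t) \<noteq> (e3 \<noteq> t)) = (e1 \<noteq> e3)"
    by argo+
  ultimately show ?thesis
    unfolding maj_weight_def by simp
qed

definition maj_bias_map :: "box \<Rightarrow> real \<Rightarrow> real" where
  "maj_bias_map P \<beta> = (\<Sum>e1\<in>UNIV. error_prob \<beta> e1 * (\<Sum>e2\<in>UNIV. error_prob \<beta> e2 * (\<Sum>e3\<in>UNIV.
     error_prob \<beta> e3 * maj_weight P e1 e2 e3)))"

lemma xor_bias_maj_step: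
  assumes P: "nonlocal_box P"
  shows "xor_bias P (maj_step M) X Y t = maj_bias_map P (xor_bias P M X Y t)"
proof -
  let ?w = "maj_weight P"
  have "xor_bias P (maj_step M) X Y t =
     expect P M X Y (\<lambda>a1 b1. expect P M X Y (\<lambda>a2 b2. expect P M X Y (\<lambda>a3 b3.
        ?w ((a1 \<noteq> b1) \<noteq> t) ((a2 \<noteq> b2) \<noteq> t) ((a3 \<noteq> b3) \<noteq> t))))"
    unfolding xor_bias_def maj_step_def triplicate_def
    by (simp only: expect_bind expect_premap expect_return prod.case fst_conv snd_conv
        xor_bias_maj_gadget[OF P, unfolded xor_bias_def] maj_weight_xor[symmetric])
  also have "\<dots> = maj_bias_map P (xor_bias P M X Y t)"
  proof -
    let ?p = "error_prob (xor_bias P M X Y t)"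
    have "expect P M X Y (\<lambda>a3 b3. ?w e1 e2 ((a3 \<noteq> b3) \<noteq> t)) = (\<Sum>e3\<in>UNIV. ?p e3 * ?w e1 e2 e3)"
      for e1 e2 by (rule expect_xor_error[OF P])
    moreover have "expect P M X Y (\<lambda>a2 b2. \<Sum>e3\<in>UNIV. ?p e3 * ?w e1 ((a2 \<noteq> b2) \<noteq> t) e3) =
        (\<Sum>e2\<in>UNIV. ?p e2 * (\<Sum>e3\<in>UNIV. ?p e3 * ?w e1 e2 e3))" for e1
      by (rule expect_xor_error[OF P, where w = "\<lambda>e2. \<Sum>e3\<in>UNIV. ?p e3 * ?w e1 e2 e3"])
    moreover have "expect P M X Y (\<lambda>a1 b1. \<Sum>e2\<in>UNIV. ?p e2 *
          (\<Sum>e3\<in>UNIV. ?p e3 * ?w ((a1 \<noteq> b1) \<noteq> t) e2 e3)) = maj_bias_map P (xor_bias P M X Y t)"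
      unfolding maj_bias_map_def
      by (rule expect_xor_error[OF P, where w = "\<lambda>e1. \<Sum>e2\<in>UNIV. ?p e2 * (\<Sum>e3\<in>UNIV. ?p e3 * ?w e1 e2 e3)"])
    ultimately show ?thesis by simp
  qed
  finally show ?thesis .
qed

lemma xor_bias_maj_step_funpow:
  assumes "nonlocal_box P"
  shows "xor_bias P ((maj_step ^^ j) M) X Y t = (maj_bias_map P ^^ j) (xor_bias P M X Y t)"
  by (induction j) (simp_all add: xor_bias_maj_step[OF assms])

text \<open>The slope of \<open>maj_bias_map P\<close> at \<open>0\<close>; the hypothesis \<open>A + B > 16\<close> of the theorem says
  exactly that it exceeds \<open>1\<close>.\<close>

definition maj_gain :: "box \<Rightarrow> real" where
  "maj_gain P =
    ((eta P False False + eta P False True + eta P True False + eta P True True)^2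
     + (2 * (eta P False False)^2 + 4 * eta P False True * eta P True False
        + 2 * (eta P True True)^2)) / 16"

lemma maj_bias_map_cubic: "\<exists>\<mu>. maj_bias_map P = (\<lambda>\<beta>. \<beta> * (maj_gain P + \<mu> * \<beta>^2))"
proof
  let ?e = "eta P"
  show "maj_bias_map P = (\<lambda>\<beta>. \<beta> * (maj_gain P + ((?e False False^2 + 2 * ?e False True * ?e True False
      + ?e True True^2) / 16 - ((?e False True^2 + ?e True False^2 + 2 * ?e False False * ?e True True) / 4
      + (?e False False + ?e True True) * (?e False True + ?e True False) / 2) / 4) * \<beta>^2))"
    unfolding fun_eq_iff maj_bias_map_def maj_weight_def maj_gain_def maj_gadget_bias_def maj3_def error_prob_def
    by (simp add: sum_UNIV_bool spin_def power2_eq_square field_simps)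
qed

text \<open>The bit \<open>\<rho>1 \<and> \<rho>2\<close> has bias \<open>1/2\<close> towards \<open>False\<close>.\<close>

definition halving_gadget :: "(bool, bool, bool, bool) protocol" where
  "halving_gadget = prot_bind shared_coin (prot_bind shared_coin
     (prot_return (\<lambda>((a, \<rho>1), \<rho>2). a \<noteq> (\<rho>1 \<and> \<rho>2)) (\<lambda>((b, _), _). b)))"

definition halve :: "('x, 'y, bool, bool) protocol \<Rightarrow> ('x, 'y, bool, bool) protocol" where
  "halve C = prot_bind C (prot_premap snd snd halving_gadget)"

lemma xor_bias_halve:
  assumes "nonlocal_box P"
  shows "xor_bias P (halve C) X Y t = xor_bias P C X Y t / 2"
proof -
  have gadget: "expect P halving_gadget a b (\<lambda>u v. spin ((u \<noteq> v) \<noteq> t)) = 1/2 * spin ((a \<noteq> b) \<noteq> t)"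
    for a b unfolding halving_gadget_def by (cases a; cases b; cases t; simp add: expect_bind spin_def)
  show ?thesis
    unfolding xor_bias_def halve_def expect_bind expect_premap snd_conv gadget
    using expect_scale[OF assms, of C X Y "1/2"] by simp
qed

section \<open>Computing a function in XOR-shared form\<close>

text \<open>\<open>g (y # Y')\<close> is \<open>g\<^sub>y Y'\<close> for the restriction \<open>g\<^sub>y l = g (y # l)\<close>: \<open>C\<close> computes both
  restrictions, and the multiplexer selects one with Bob's bit \<open>y\<close>.\<close>

definition mux_step ::
  "bool \<Rightarrow> (bool list \<Rightarrow> bool, bool list, bool, bool) protocol \<Rightarrow> (bool list \<Rightarrow> bool, bool list, bool, bool) protocol"
where
  "mux_step flip C = prot_bind (prot_premap (\<lambda>g l. g (False # l)) tl C)
    (prot_bind (prot_premap (\<lambda>(g, _) l. g (True # l)) (\<lambda>(Y, _). tl Y) C)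
      (prot_premap (\<lambda>((_, a0), a1). (a0, a1)) (\<lambda>((Y, b0), b1). (hd Y, b0, b1)) (mux_gadget flip)))"

text \<open>Alice's input \<open>g\<close> is her row \<open>f X\<close> of the function table.\<close>

definition computes_with_bias ::
  "box \<Rightarrow> (bool list \<Rightarrow> bool, bool list, bool, bool) protocol \<Rightarrow> nat \<Rightarrow> real \<Rightarrow> bool"
where
  "computes_with_bias P C m c \<longleftrightarrow> (\<forall>g Y. length Y = m \<longrightarrow> xor_bias P C g Y (g Y) = c)"

lemma computes_with_bias_mux_step:
  assumes P: "nonlocal_box P" and C: "computes_with_bias P C m c"
  shows "computes_with_bias P (mux_step flip C) (Suc m) (spin flip * eta_mean P * c)"
  unfolding computes_with_bias_def
proof (intro allI impI)
  fix g :: "bool list \<Rightarrow> bool" and Y :: "bool list"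
  assume "length Y = Suc m"
  then obtain y Y' where Y: "Y = y # Y'" and len: "length Y' = m" by (cases Y) auto
  define g0 where "g0 l = g (False # l)" for l
  define g1 where "g1 l = g (True # l)" for l
  let ?k = "spin flip * eta_mean P"
  have "xor_bias P (mux_step flip C) g Y (g Y) = expect P C g0 Y' (\<lambda>a0 b0. expect P C g1 Y' (\<lambda>a1 b1.
      spin flip * spin ((if y then a1 \<noteq> b1 else a0 \<noteq> b0) \<noteq> g Y) * eta_mean P))"
    unfolding mux_step_def xor_bias_def g0_def g1_def Y
    by (simp only: expect_bind expect_premap prod.case list.sel
        xor_bias_mux_gadget[OF P, unfolded xor_bias_def])
  also have "\<dots> = ?k * c"
  proof (cases y)
    case True
    then have "g Y = g1 Y'" by (simp add: Y g1_def)
    with True C len show ?thesis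
      by (simp add: expect_scale[OF P] expect_const[OF P] computes_with_bias_def xor_bias_def
          mult.commute[of _ "eta_mean P"] mult.assoc)
  next
    case False
    then have "g Y = g0 Y'" by (simp add: Y g0_def)
    with False C len show ?thesis
      by (simp add: expect_scale[OF P] expect_const[OF P] computes_with_bias_def xor_bias_def
          mult.commute[of _ "eta_mean P"] mult.assoc)
  qed
  finally show "xor_bias P (mux_step flip C) g Y (g Y) = ?k * c" .
qed

definition leaf :: "(bool list \<Rightarrow> bool, bool list, bool, bool) protocol" where
  "leaf = prot_return (\<lambda>g. g []) (\<lambda>_. False)"

lemma computes_with_bias_halve_leaf:
  assumes "nonlocal_box P"
  shows "computes_with_bias P ((halve ^^ s) leaf) 0 ((1/2)^s)"
proof -
  have "xor_bias P ((halve ^^ s) leaf) g [] t = xor_bias P leaf g [] t / 2^s" for g t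
    by (induction s) (simp_all add: xor_bias_halve[OF assms])
  then show ?thesis
    by (simp add: computes_with_bias_def xor_bias_def leaf_def spin_def power_one_over)
qed

lemma computes_with_bias_maj_step:
  "nonlocal_box P \<Longrightarrow> computes_with_bias P C m c \<Longrightarrow>
   computes_with_bias P ((maj_step ^^ j) C) m ((maj_bias_map P ^^ j) c)"
  by (simp add: computes_with_bias_def xor_bias_maj_step_funpow)

lemma abs_eta_le_1:
  assumes "nonlocal_box P"
  shows "\<bar>eta P x y\<bar> \<le> 1"
proof -
  have "P a b x y \<ge> 0" for a b
    using assms unfolding nonlocal_box_def by blast
  note nonneg = this[of True True] this[of True False] this[of False True] this[of False False]
  show ?thesis
    using nonneg nonlocal_box_sum_eq_1[OF assms, of x y] unfolding eta_def
    by (cases x; cases y; simp add: sum_UNIV_bool abs_le_iff)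
qed

lemma abs_eta_mean_le_1:
  assumes "nonlocal_box P"
  shows "\<bar>eta_mean P\<bar> \<le> 1"
  using abs_eta_le_1[OF assms, of False False] abs_eta_le_1[OF assms, of False True]
    abs_eta_le_1[OF assms, of True False] abs_eta_le_1[OF assms, of True True]
  unfolding eta_mean_def by (simp add: abs_le_iff)

lemma eta_mean_nonzero:
  assumes P: "nonlocal_box P" and gain: "1 < maj_gain P"
  shows "eta_mean P \<noteq> 0"
proof
  assume "eta_mean P = 0"
  then have "eta P False False + eta P False True + eta P True False + eta P True True = 0"
    by (simp add: eta_mean_def)
  moreover have "(eta P False False)^2 \<le> 1" "(eta P True True)^2 \<le> 1"
    using abs_eta_le_1[OF P] by (simp_all add: abs_square_le_1)
  moreover have "\<bar>eta P False True * eta P True False\<bar> \<le> 1"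
    using abs_eta_le_1[OF P, of False True] abs_eta_le_1[OF P, of True False]
    by (simp add: abs_mult mult_le_one)
  ultimately have "maj_gain P \<le> 1/2"
    unfolding maj_gain_def abs_le_iff by simp
  with gain show False by simp
qed

text \<open>An iterate that is still below \<open>\<delta>\<close> grows by at most the factor \<open>L\<close>, so it cannot jump
  over the window \<open>[\<delta>, \<epsilon>]\<close>.\<close>

lemma funpow_reaches_window:
  fixes g :: "real \<Rightarrow> real"
  assumes grow: "\<And>v. 0 < v \<Longrightarrow> v \<le> \<epsilon> \<Longrightarrow> r * v \<le> g v"
    and bound: "\<And>v. 0 < v \<Longrightarrow> v \<le> \<epsilon> \<Longrightarrow> g v \<le> L * v"
    and "1 < r" "0 < \<delta>" "\<delta> * L \<le> \<epsilon>" "0 < v" "v \<le> \<epsilon>"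
  shows "\<exists>j. \<delta> \<le> (g ^^ j) v \<and> (g ^^ j) v \<le> \<epsilon>"
proof -
  obtain n where "\<delta> / v < r ^ n"
    using real_arch_pow[OF \<open>1 < r\<close>] by blast
  then have "\<delta> \<le> r ^ n * v"
    using \<open>0 < v\<close> by (simp add: field_simps)
  with \<open>0 < v\<close> \<open>v \<le> \<epsilon>\<close> show ?thesis
  proof (induction n arbitrary: v)
    case 0
    then show ?case by (intro exI[of _ 0]) simp
  next
    case (Suc n)
    show ?case
    proof (cases "\<delta> \<le> v")
      case True
      with Suc.prems show ?thesis by (intro exI[of _ 0]) simp
    next
      case False
      have rv: "r * v \<le> g v" and Lv: "g v \<le> L * v"
        using grow bound Suc.prems by auto
      have "0 < r * v"
        using \<open>1 < r\<close> Suc.prems by simp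
      then have pos: "0 < g v"
        using rv by linarith
      have "r \<le> L"
        using rv Lv Suc.prems mult_le_cancel_right_pos[of v r L] by linarith
      then have "L * v \<le> L * \<delta>"
        using False \<open>1 < r\<close> by (intro mult_left_mono) auto
      then have small: "g v \<le> \<epsilon>"
        using Lv \<open>\<delta> * L \<le> \<epsilon>\<close> by (simp add: mult.commute)
      have "\<delta> \<le> r ^ n * (r * v)"
        using Suc.prems by (simp add: algebra_simps)
      also have "\<dots> \<le> r ^ n * g v"
        using rv \<open>1 < r\<close> by (intro mult_left_mono) auto
      finally obtain j where "\<delta> \<le> (g ^^ j) (g v) \<and> (g ^^ j) (g v) \<le> \<epsilon>"
        using Suc.IH[OF pos small] by blast
      then show ?thesis by (intro exI[of _ "Suc j"]) (simp add: funpow_swap1)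
    qed
  qed
qed

lemma cubic_map_window:
  fixes gain \<mu> :: real
  assumes "1 < gain"
  obtains \<delta> \<epsilon> where "0 < \<delta>" "\<delta> \<le> \<epsilon>"
    "\<And>v. 0 < v \<Longrightarrow> v \<le> \<epsilon> \<Longrightarrow>
       \<exists>j. \<delta> \<le> ((\<lambda>v. v * (gain + \<mu> * v^2)) ^^ j) v \<and> ((\<lambda>v. v * (gain + \<mu> * v^2)) ^^ j) v \<le> \<epsilon>"
proof -
  define \<epsilon> where "\<epsilon> = min 1 ((gain - 1) / (2 * (\<bar>\<mu>\<bar> + 1)))"
  define L where "L = gain + \<bar>\<mu>\<bar>"
  define \<delta> where "\<delta> = \<epsilon> / (L + 1)"
  have \<epsilon>: "0 < \<epsilon>" "\<epsilon> \<le> 1" "\<bar>\<mu>\<bar> * \<epsilon> \<le> (gain - 1) / 2"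
    using assms by (auto simp: \<epsilon>_def field_simps min_def)
  have L: "0 < L"
    using assms by (simp add: L_def)
  have coeff: "(1 + gain) / 2 \<le> gain + \<mu> * v^2 \<and> gain + \<mu> * v^2 \<le> L" if "0 < v" "v \<le> \<epsilon>" for v
  proof -
    have "v^2 \<le> \<epsilon>" "v^2 \<le> 1"
      using that \<epsilon> by (auto simp: power2_eq_square intro: order_trans[OF mult_left_le])
    then have "\<bar>\<mu> * v^2\<bar> \<le> \<bar>\<mu>\<bar> * \<epsilon>" "\<bar>\<mu> * v^2\<bar> \<le> \<bar>\<mu>\<bar>"
      by (auto simp: abs_mult intro: mult_left_mono mult_left_le)
    then show ?thesis
      using \<epsilon>(3) unfolding L_def by (auto simp: abs_le_iff)
  qed
  show ?thesis
  proof (rule that)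
    show "0 < \<delta>" "\<delta> \<le> \<epsilon>"
      using \<epsilon> L by (auto simp: \<delta>_def field_simps)
    show "\<exists>j. \<delta> \<le> ((\<lambda>v. v * (gain + \<mu> * v^2)) ^^ j) v \<and> ((\<lambda>v. v * (gain + \<mu> * v^2)) ^^ j) v \<le> \<epsilon>"
      if "0 < v" "v \<le> \<epsilon>" for v
    proof (rule funpow_reaches_window[where r = "(1 + gain) / 2" and L = L])
      show "(1 + gain) / 2 * w \<le> w * (gain + \<mu> * w^2)" "w * (gain + \<mu> * w^2) \<le> L * w"
        if "0 < w" "w \<le> \<epsilon>" for w
        using coeff[OF that] that by (auto simp: mult.commute intro: mult_left_mono)
      show "\<delta> * L \<le> \<epsilon>"
        using \<epsilon> L by (simp add: \<delta>_def field_simps)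
    qed (use assms \<open>0 < \<delta>\<close> that in auto)
  qed
qed

lemma computes_with_bias_in_window:
  assumes P: "nonlocal_box P" and nonzero: "eta_mean P \<noteq> 0" and "0 < \<delta>" "\<delta> \<le> \<epsilon>"
    and window: "\<And>v. 0 < v \<Longrightarrow> v \<le> \<epsilon> \<Longrightarrow>
      \<exists>j. \<delta> \<le> (maj_bias_map P ^^ j) v \<and> (maj_bias_map P ^^ j) v \<le> \<epsilon>"
  shows "\<exists>C c. computes_with_bias P C m c \<and> \<delta> \<le> c \<and> c \<le> \<epsilon>"
proof -
  have boost: "\<exists>C c. computes_with_bias P C m c \<and> \<delta> \<le> c \<and> c \<le> \<epsilon>"
    if C: "computes_with_bias P C m v" and v: "0 < v" "v \<le> \<epsilon>" for C m v
  proof -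
    obtain j where "\<delta> \<le> (maj_bias_map P ^^ j) v" "(maj_bias_map P ^^ j) v \<le> \<epsilon>"
      using window[OF v] by blast
    then show ?thesis
      using computes_with_bias_maj_step[OF P C] by blast
  qed
  show ?thesis
  proof (induction m)
    case 0
    obtain s where "(1/2::real)^s < \<epsilon>"
      using real_arch_pow_inv[of \<epsilon> "1/2"] \<open>0 < \<delta>\<close> \<open>\<delta> \<le> \<epsilon>\<close> by auto
    then show ?case
      using boost[OF computes_with_bias_halve_leaf[OF P, of s]] by simp
  next
    case (Suc m)
    then obtain C c where C: "computes_with_bias P C m c" and c: "\<delta> \<le> c" "c \<le> \<epsilon>"
      by blast
    have "spin (eta_mean P < 0) * eta_mean P = \<bar>eta_mean P\<bar>"
      by (simp add: spin_def)
    moreover have "0 < \<bar>eta_mean P\<bar> * c" "\<bar>eta_mean P\<bar> * c \<le> \<epsilon>"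
      using nonzero abs_eta_mean_le_1[OF P] c \<open>0 < \<delta>\<close>
      by (auto intro: order_trans[OF mult_left_le_one_le])
    ultimately show ?case
      using boost[OF computes_with_bias_mux_step[OF P C, of "eta_mean P < 0"]] by simp
  qed
qed

section \<open>Collapse of communication complexity\<close>

lemma success_prob_one_bit:
  "success_prob P (rand_len C) (box_count C) (alice_in C) (bob_in C) (\<lambda>Y r bs. [bob_out C Y r bs])
     (\<lambda>X r as msg. alice_out C X r as \<noteq> hd msg) f X Y =
   expect P C X Y (\<lambda>u v. if (u \<noteq> v) = f X Y then 1 else 0)"
  unfolding success_prob_def expect_def outcomes_def
  by (simp add: sum.cartesian_product split_def)

lemma CC_le_1_of_computes_with_bias:
  assumes P: "nonlocal_box P" and C: "computes_with_bias P C m c" and p: "p \<le> (1 + c) / 2"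
  shows "CC_le_1 P p f n m"
proof -
  define C' where "C' = prot_premap f id C"
  have "p \<le> success_prob P (rand_len C') (box_count C') (alice_in C') (bob_in C')
      (\<lambda>Y r bs. [bob_out C' Y r bs]) (\<lambda>X r as msg. alice_out C' X r as \<noteq> hd msg) f X Y"
    if "length Y = m" for X Y
  proof -
    have indicator: "(\<lambda>u v. if (u \<noteq> v) = f X Y then 1 else 0) =
        (\<lambda>u v. 1/2 + 1/2 * spin ((u \<noteq> v) \<noteq> f X Y))"
      by (auto simp: fun_eq_iff spin_def)
    have "success_prob P (rand_len C') (box_count C') (alice_in C') (bob_in C')
        (\<lambda>Y r bs. [bob_out C' Y r bs]) (\<lambda>X r as msg. alice_out C' X r as \<noteq> hd msg) f X Y
      = 1/2 + 1/2 * xor_bias P C (f X) Y (f X Y)"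
      unfolding success_prob_one_bit C'_def expect_premap id_apply indicator xor_bias_def
      by (rule expect_affine[OF P])
    with C that p show ?thesis
      by (simp add: computes_with_bias_def)
  qed
  then have "cc_protocol P p f n m 1"
    unfolding cc_protocol_def
    by (intro exI[of _ "rand_len C'"] exI[of _ "box_count C'"] exI[of _ "alice_in C'"]
        exI[of _ "bob_in C'"] exI[of _ "\<lambda>Y r bs. [bob_out C' Y r bs]"]
        exI[of _ "\<lambda>X r as msg. alice_out C' X r as \<noteq> hd msg"]) auto
  then show ?thesis
    unfolding CC_le_1_def by blast
qed

theorem theorem1:
  fixes P :: box
  assumes "nonlocal_box P"
    and "(eta P False False + eta P False True + eta P True False + eta P True True)^2
         + (2 * (eta P False False)^2 + 4 * eta P False True * eta P True False
            + 2 * (eta P True True)^2) > 16"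
  shows "\<exists>p > 1/2. \<forall>n m (f :: bool list \<Rightarrow> bool list \<Rightarrow> bool).
           n \<ge> 1 \<longrightarrow> m \<ge> 1 \<longrightarrow> CC_le_1 P p f n m"
proof -
  have gain: "1 < maj_gain P"
    using assms(2) by (simp add: maj_gain_def)
  obtain \<mu> where cubic: "maj_bias_map P = (\<lambda>\<beta>. \<beta> * (maj_gain P + \<mu> * \<beta>^2))"
    using maj_bias_map_cubic by blast
  obtain \<delta> \<epsilon> where \<delta>: "0 < \<delta>" "\<delta> \<le> \<epsilon>" and window: "\<And>v. 0 < v \<Longrightarrow> v \<le> \<epsilon> \<Longrightarrow>
      \<exists>j. \<delta> \<le> (maj_bias_map P ^^ j) v \<and> (maj_bias_map P ^^ j) v \<le> \<epsilon>"
    using cubic_map_window[OF gain, of \<mu>] unfolding cubic by blast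
  have "CC_le_1 P ((1 + \<delta>) / 2) f n m" for f n m
  proof -
    obtain C c where "computes_with_bias P C m c" "\<delta> \<le> c"
      using computes_with_bias_in_window[OF assms(1) eta_mean_nonzero[OF assms(1) gain] \<delta> window]
      by blast
    then show ?thesis
      using CC_le_1_of_computes_with_bias[OF assms(1)] by simp
  qed
  moreover have "1/2 < (1 + \<delta>) / 2"
    using \<delta> by simp
  ultimately show ?thesis
    by blast
qed

end
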